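(* Let $K\ge 1$ and $M\ge 2$ be integers, and let $p>0$, $\beta_k>0$, $\alpha>0$, $p_{ce}>0$, $\delta_k>0$, $\sigma^2>0$ be real numbers and $\zeta_k\in(0,1]$. Let $h$ be a circularly-symmetric complex Gaussian random variable, $h\sim\mathcal{CN}(0,\beta_k)$ (so $|h|^2$ is exponentially distributed with mean $\beta_k$), and define $$\phi=\mathbb{E}\left\{\frac{1}{\frac{\beta_k |h|^2 \alpha p_{ce}\delta_k}{K\sigma^2}+1}\right\},\qquad P_{Ik}=p\,\beta_k\left[\zeta_k\left(M-(M-1)\phi-1\right)+1\right].$$ Define $$\mathcal{L}_1(\alpha,p_{ce})=1-\frac{K\sigma^2}{\beta_k^2\alpha p_{ce}\delta_k}\ln\!\left(1+\frac{\beta_k^2\alpha p_{ce}\delta_k}{K\sigma^2}\right),\qquad \mathcal{L}_2(\alpha,p_{ce})=1-\frac{K\sigma^2}{2\beta_k^2\alpha p_{ce}\delta_k}\ln\!\left(1+\frac{2\beta_k^2\alpha p_{ce}\delta_k}{K\sigma^2}\right).$$ Then $$P_{Ik}^{L}:=p\beta_k\left[\zeta_k(M-1)\mathcal{L}_1(\alpha,p_{ce})+1\right] \;<\; P_{Ik} \;<\; p\beta_k\left[\zeta_k(M-1)\mathcal{L}_2(\alpha,p_{ce})+1\right]=:P_{Ik}^{U}.$$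
   Context: Setting: a reader with $M$ transmit antennas powers $K$ single-antenna backscatter tags. $P_{Ik}$ is the incident signal power at tag $k$ when the reader transmits a signal of power $p$ with energy beamformer $\sum_{j}\sqrt{\zeta_j}\,\hat{\mathbf h}_{jr}^*/\|\hat{\mathbf h}_{jr}\|$ built from least-squares estimates of the backscatter channel; $\beta_k$ is the path loss to tag $k$, $\zeta_k$ the energy-allocation weight of tag $k$, $\alpha$ the channel-estimation duration (in symbol periods), $p_{ce}$ the per-antenna pilot power, $\delta_k$ the reflection coefficient of tag $k$, $\sigma^2$ the noise power, and $h$ models the unknown tag-to-reader (backward) channel coefficient. The closed form of $P_{Ik}$ displayed in the claim (expectation over the unknown backward channel) is taken as its definition. *)

theory Defs
  imports "HOL-Probability.Probability"
begin

definition phi_exp :: "real measure \<Rightarrow> (real \<Rightarrow> real) \<Rightarrow> nat \<Rightarrow> real \<Rightarrow> real \<Rightarrow> real \<Rightarrow> real \<Rightarrow> real \<Rightarrow> real" where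
  "phi_exp \<Omega> G K \<beta> \<alpha> pce \<delta> \<sigma>2 =
     prob_space.expectation \<Omega> (\<lambda>\<omega>. 1 / (\<beta> * G \<omega> * \<alpha> * pce * \<delta> / (real K * \<sigma>2) + 1))"

definition P_I :: "real \<Rightarrow> real \<Rightarrow> real \<Rightarrow> nat \<Rightarrow> real \<Rightarrow> real" where
  "P_I p \<beta> \<zeta> M \<phi> = p * \<beta> * (\<zeta> * (real M - (real M - 1) * \<phi> - 1) + 1)"

definition L1 :: "nat \<Rightarrow> real \<Rightarrow> real \<Rightarrow> real \<Rightarrow> real \<Rightarrow> real \<Rightarrow> real" where
  "L1 K \<beta> \<alpha> pce \<delta> \<sigma>2 = 1 - (real K * \<sigma>2) / (\<beta>^2 * \<alpha> * pce * \<delta>) *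
     ln (1 + (\<beta>^2 * \<alpha> * pce * \<delta>) / (real K * \<sigma>2))"

definition L2 :: "nat \<Rightarrow> real \<Rightarrow> real \<Rightarrow> real \<Rightarrow> real \<Rightarrow> real \<Rightarrow> real" where
  "L2 K \<beta> \<alpha> pce \<delta> \<sigma>2 = 1 - (real K * \<sigma>2) / (2 * \<beta>^2 * \<alpha> * pce * \<delta>) *
     ln (1 + (2 * \<beta>^2 * \<alpha> * pce * \<delta>) / (real K * \<sigma>2))"

end

theory Submission
  imports Defs
begin

text \<open>
  Rescaling \<open>G = \<beta> x\<close> turns \<open>\<phi>\<close> into \<open>\<Phi>(a) = E[1/(aX+1)]\<close> with \<open>X\<close> standard exponential
  and \<open>a = \<beta>\<^sup>2 \<alpha> p\<^sub>c\<^sub>e \<delta> / (K \<sigma>\<^sup>2)\<close>, so the claim is \<open>ln(1+2a)/(2a) < \<Phi>(a) < ln(1+a)/a\<close>.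
  The two bounds are \<open>E[1/(aU+1)]\<close> for \<open>U\<close> uniform on \<open>[0,2]\<close> and on \<open>[0,1]\<close>.
  Both comparisons are sign-change arguments: integrate the density difference
  \<open>e\<^sup>-\<^sup>x - 1\<^bsub>[0,c]\<^esub>/c\<close> against \<open>1/(ax+1) - \<ell>(x)\<close> for an affine \<open>\<ell>\<close> chosen so that
  both factors change sign at the same points.  For \<open>c = 1\<close>, \<open>\<ell>\<close> is the constant
  \<open>1/(a+1)\<close> and both factors change sign only at 1 (in opposite directions); for \<open>c = 2\<close>,
  \<open>\<ell>\<close> is the secant through \<open>ln 2\<close> and 2, where \<open>e\<^sup>-\<^sup>x\<close> crosses \<open>1/2\<close>, and since both laws
  have mean 1 the affine part integrates to zero.
\<close>

definition exp_recip_mean :: "real \<Rightarrow> real" where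
  "exp_recip_mean a = (\<integral>x. exp (-x) * indicator {0..} x / (a * x + 1) \<partial>lborel)"

lemma has_bochner_integral_exp_neg_I0i:
  "has_bochner_integral lborel (\<lambda>x. exp (-x) * indicator {0..} x) (1::real)"
  using has_bochner_integral_I0i_power_exp_m'[of 0] by simp

lemma has_bochner_integral_x_exp_neg_I0i:
  "has_bochner_integral lborel (\<lambda>x. x * exp (-x) * indicator {0..} x) (1::real)"
  using has_bochner_integral_I0i_power_exp_m'[of 1] by simp

lemma integrable_exp_neg_div_affine:
  fixes a :: real
  assumes "0 \<le> a"
  shows "integrable lborel (\<lambda>x. exp (-x) * indicator {0..} x / (a * x + 1))"
proof (rule Bochner_Integration.integrable_bound)
  show "integrable lborel (\<lambda>x. exp (-x) * indicator {0..} x :: real)"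
    using has_bochner_integral_exp_neg_I0i by (simp add: has_bochner_integral_iff)
  show "AE x in lborel. norm (exp (-x) * indicator {0..} x / (a * x + 1))
                        \<le> norm (exp (-x) * indicator {0..} x :: real)"
  proof (rule AE_I2)
    fix x :: real
    show "norm (exp (-x) * indicator {0..} x / (a * x + 1))
          \<le> norm (exp (-x) * indicator {0..} x :: real)"
    proof (cases "0 \<le> x")
      case True
      then have "1 \<le> a * x + 1" using assms by simp
      then show ?thesis using True by (simp add: divide_le_eq)
    qed simp
  qed
qed measurable

lemma has_bochner_integral_FTC_Icc:
  fixes f F :: "real \<Rightarrow> real"
  assumes "u \<le> v" "continuous_on {u..v} f"
    and "\<And>x. u \<le> x \<Longrightarrow> x \<le> v \<Longrightarrow> (F has_real_derivative f x) (at x within {u..v})"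
  shows "has_bochner_integral lborel (\<lambda>x. indicator {u..v} x * f x) (F v - F u)"
proof -
  have "integrable lborel (\<lambda>x. indicator {u..v} x *\<^sub>R f x)"
    using borel_integrable_atLeastAtMost'[OF assms(2)] by (simp add: set_integrable_def)
  moreover have "(\<integral>x. indicator {u..v} x *\<^sub>R f x \<partial>lborel) = F v - F u"
    by (rule integral_FTC_atLeastAtMost[OF assms(1) _ assms(2)])
       (simp add: assms(3) has_real_derivative_iff_has_vector_derivative[symmetric])
  ultimately show ?thesis by (simp add: has_bochner_integral_iff)
qed

lemma has_bochner_integral_pos:
  fixes f :: "real \<Rightarrow> real"
  assumes "has_bochner_integral lborel f I" "\<And>x. 0 \<le> f x"
    and "\<And>x. u < x \<Longrightarrow> x < v \<Longrightarrow> 0 < f x" "u < v"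
  shows "0 < I"
proof -
  have int: "integrable lborel f" and I: "I = integral\<^sup>L lborel f"
    using assms(1) by (auto simp: has_bochner_integral_iff)
  have "I \<noteq> 0"
  proof
    assume "I = 0"
    then have "AE x in lborel. f x = 0"
      using integral_nonneg_eq_0_iff_AE[OF int] assms(2) I by simp
    then have "AE x in lborel. x \<notin> {u<..<v}"
      by eventually_elim (use assms(3) in force)
    then have "emeasure lborel {u<..<v} = 0"
      by (subst (asm) AE_iff_measurable[of "{u<..<v}"]) auto
    then show False using assms(4) by simp
  qed
  moreover have "0 \<le> I" using assms(2) I by (simp add: integral_nonneg)
  ultimately show ?thesis by linarith
qed

lemma has_bochner_integral_exp_minus_uniform:
  fixes a c A B :: real
  assumes "0 < a" "0 < c"
  shows "has_bochner_integral lborel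
    (\<lambda>x. (exp (-x) * indicator {0..} x - indicator {0..c} x / c) * (1 / (a * x + 1) - A - B * x))
    (exp_recip_mean a - ln (1 + a * c) / (a * c) - B * (1 - c / 2))"
proof -
  have pos: "0 < a * x + 1" if "0 \<le> x" for x
    using assms(1) that by (intro add_nonneg_pos mult_nonneg_nonneg) auto
  have uniform: "has_bochner_integral lborel
      (\<lambda>x. indicator {0..c} x * ((1 / (a * x + 1) - A - B * x) / c))
      ((ln (1 + a * c) / a - A * c - B * c\<^sup>2 / 2) / c - (ln (1 + a * 0) / a - A * 0 - B * 0\<^sup>2 / 2) / c)"
  proof (rule has_bochner_integral_FTC_Icc)
    show "continuous_on {0..c} (\<lambda>x. (1 / (a * x + 1) - A - B * x) / c)"
      by (intro continuous_intros) (use pos assms(2) in fastforce)+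
    fix x assume "0 \<le> x" "x \<le> c"
    with pos[of x] show "((\<lambda>x. (ln (1 + a * x) / a - A * x - B * x\<^sup>2 / 2) / c) has_real_derivative
        (1 / (a * x + 1) - A - B * x) / c) (at x within {0..c})"
      using assms by (auto intro!: derivative_eq_intros)
  qed (use assms(2) in simp)
  have "has_bochner_integral lborel
      (\<lambda>x. exp (-x) * indicator {0..} x / (a * x + 1) - A * (exp (-x) * indicator {0..} x)
          - B * (x * exp (-x) * indicator {0..} x)
          - indicator {0..c} x * ((1 / (a * x + 1) - A - B * x) / c))
      (exp_recip_mean a - A * 1 - B * 1
          - ((ln (1 + a * c) / a - A * c - B * c\<^sup>2 / 2) / c - (ln (1 + a * 0) / a - A * 0 - B * 0\<^sup>2 / 2) / c))"
    unfolding exp_recip_mean_def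
    by (intro has_bochner_integral_diff has_bochner_integral_mult_right uniform
        has_bochner_integral_exp_neg_I0i has_bochner_integral_x_exp_neg_I0i
        has_bochner_integral_integrable integrable_exp_neg_div_affine) (use assms in simp)
  then show ?thesis
    by (rule has_bochner_integral_cong[THEN iffD1, rotated -1])
       (use assms in \<open>auto simp: field_simps power2_eq_square\<close>)
qed

lemma exp_recip_mean_less_ln:
  fixes a :: real
  assumes "0 < a"
  shows "exp_recip_mean a < ln (1 + a) / a"
proof -
  define d where "d x = exp (-x) * indicator {0..} x - indicator {0..1} x" for x :: real
  define r where "r x = 1 / (a * x + 1) - 1 / (a + 1)" for x :: real
  have "has_bochner_integral lborel (\<lambda>x. d x * r x) (exp_recip_mean a - ln (1 + a) / a)"
    using has_bochner_integral_exp_minus_uniform[OF assms zero_less_one, of "1 / (a + 1)" 0]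
    by (simp add: d_def r_def)
  then have int: "has_bochner_integral lborel (\<lambda>x. - (d x * r x)) (ln (1 + a) / a - exp_recip_mean a)"
    by (fastforce dest: has_bochner_integral_minus)
  have r_eq: "r x = a * (1 - x) / ((a * x + 1) * (a + 1))" if "0 \<le> x" for x
  proof -
    have "0 < a * x + 1" using assms that by (intro add_nonneg_pos mult_nonneg_nonneg) auto
    then show ?thesis using assms by (simp add: r_def field_simps)
  qed
  have d_r_sign: "0 \<le> - (d x * r x) \<and> (1 < x \<longrightarrow> 0 < - (d x * r x))" for x
  proof (cases "0 \<le> x")
    case True
    have den: "0 < (a * x + 1) * (a + 1)"
      using assms True by (intro mult_pos_pos add_nonneg_pos mult_nonneg_nonneg) auto
    show ?thesis
    proof (cases "x \<le> 1")
      case True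
      then have "d x \<le> 0" "0 \<le> r x"
        using \<open>0 \<le> x\<close> assms den by (auto simp: d_def r_eq)
      then show ?thesis using True by (simp add: mult_nonpos_nonneg)
    next
      case False
      then have "0 < d x" "r x < 0"
        using \<open>0 \<le> x\<close> assms den by (auto simp: d_def r_eq divide_neg_pos mult_pos_neg)
      then show ?thesis by (simp add: mult_pos_neg less_imp_le)
    qed
  qed (simp add: d_def)
  have "0 < ln (1 + a) / a - exp_recip_mean a"
    using has_bochner_integral_pos[OF int, of 1 2] d_r_sign by auto
  then show ?thesis by simp
qed

lemma recip_affine_minus_secant:
  fixes a p q x :: real
  assumes "a * x + 1 \<noteq> 0" "a * p + 1 \<noteq> 0" "a * q + 1 \<noteq> 0"
  shows "1 / (a * x + 1) - (1 + a * p + a * q) / ((a * p + 1) * (a * q + 1))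
           + a / ((a * p + 1) * (a * q + 1)) * x
         = a\<^sup>2 * ((x - p) * (x - q)) / ((a * x + 1) * (a * p + 1) * (a * q + 1))"
proof -
  have "(a * p + 1) * (a * q + 1) \<noteq> 0" "(a * x + 1) * (a * p + 1) * (a * q + 1) \<noteq> 0"
    using assms by simp_all
  with assms show ?thesis
    by (simp add: divide_simps) (simp add: algebra_simps power2_eq_square)
qed

lemma ln_div_less_exp_recip_mean:
  fixes a :: real
  assumes "0 < a"
  shows "ln (1 + 2 * a) / (2 * a) < exp_recip_mean a"
proof -
  define p :: real where "p = ln 2"
  have p: "0 < p" "p < 2" "exp (-p) = 1 / 2"
    using ln_less_self[of 2] by (auto simp: p_def exp_minus)
  define D where "D = (a * p + 1) * (a * 2 + 1)"
  define d where "d x = exp (-x) * indicator {0..} x - indicator {0..2} x / 2" for x :: real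
  define r where "r x = 1 / (a * x + 1) - (1 + a * p + a * 2) / D + a / D * x" for x :: real
  have int: "has_bochner_integral lborel (\<lambda>x. d x * r x) (exp_recip_mean a - ln (1 + 2 * a) / (2 * a))"
    using has_bochner_integral_exp_minus_uniform[OF assms, of 2 "(1 + a * p + a * 2) / D" "- a / D"]
    by (simp add: d_def r_def mult.commute)
  have r_eq: "r x = a\<^sup>2 / ((a * x + 1) * D) * ((x - p) * (x - 2))" if "0 \<le> x" for x
  proof -
    have "0 < a * x + 1" "0 < a * p + 1" "0 < a * 2 + 1"
      using assms that p by (auto intro!: add_nonneg_pos mult_nonneg_nonneg)
    then show ?thesis
      unfolding r_def D_def by (subst recip_affine_minus_secant) (auto simp: field_simps)
  qed
  have d_sign: "0 \<le> d x * ((x - p) * (x - 2)) \<and> (2 < x \<longrightarrow> 0 < d x * ((x - p) * (x - 2)))"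
    if "0 \<le> x" for x
  proof -
    consider "x \<le> p" | "p < x" "x \<le> 2" | "2 < x" by linarith
    then show ?thesis
    proof cases
      case 1
      then have "exp (-p) \<le> exp (-x)" by simp
      then have "0 \<le> d x" using 1 p that by (simp add: d_def)
      moreover have "0 \<le> (x - p) * (x - 2)" using 1 p by (intro mult_nonpos_nonpos) auto
      ultimately show ?thesis using 1 p by simp
    next
      case 2
      then have "exp (-x) < exp (-p)" by simp
      then have "d x \<le> 0" using 2 p by (simp add: d_def)
      moreover have "(x - p) * (x - 2) \<le> 0" using 2 by (intro mult_nonneg_nonpos) auto
      ultimately show ?thesis using 2 by (simp add: mult_nonpos_nonpos)
    next
      case 3
      then show ?thesis using p by (auto simp: d_def intro!: mult_pos_pos)
    qed
  qed
  have d_r_sign: "0 \<le> d x * r x \<and> (2 < x \<longrightarrow> 0 < d x * r x)" for x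
  proof (cases "0 \<le> x")
    case True
    have "0 < a\<^sup>2 / ((a * x + 1) * D)"
      using assms True p by (auto simp: D_def intro!: divide_pos_pos mult_pos_pos add_nonneg_pos)
    moreover have "d x * r x = a\<^sup>2 / ((a * x + 1) * D) * (d x * ((x - p) * (x - 2)))"
      using r_eq[OF True] by simp
    ultimately show ?thesis using d_sign[OF True] by (metis less_imp_le mult_nonneg_nonneg mult_pos_pos)
  qed (simp add: d_def)
  have "0 < exp_recip_mean a - ln (1 + 2 * a) / (2 * a)"
    using has_bochner_integral_pos[OF int, of 2 3] d_r_sign by auto
  then show ?thesis by simp
qed

lemma integral_recip_affine_exponential:
  fixes \<beta> c :: real and G :: "'a \<Rightarrow> real"
  assumes "0 < \<beta>" "distributed \<Omega> lborel G (exponential_density (1 / \<beta>))"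
  shows "(\<integral>\<omega>. 1 / (c * G \<omega> + 1) \<partial>\<Omega>) = exp_recip_mean (c * \<beta>)"
proof -
  have "(\<integral>\<omega>. 1 / (c * G \<omega> + 1) \<partial>\<Omega>)
      = (\<integral>x. exponential_density (1 / \<beta>) x * (1 / (c * x + 1)) \<partial>lborel)"
    by (rule distributed_integral[symmetric, OF assms(2)])
       (auto simp: exponential_density_def assms(1) less_imp_le)
  also have "\<dots> = \<bar>\<beta>\<bar> *\<^sub>R (\<integral>y. exponential_density (1 / \<beta>) (0 + \<beta> * y) * (1 / (c * (0 + \<beta> * y) + 1)) \<partial>lborel)"
    by (rule lborel_integral_real_affine) (use assms(1) in simp)
  also have "\<dots> = exp_recip_mean (c * \<beta>)"
  proof -
    have "\<bar>\<beta>\<bar> * (exponential_density (1 / \<beta>) (0 + \<beta> * y) * (1 / (c * (0 + \<beta> * y) + 1)))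
        = exp (-y) * indicator {0..} y / (c * \<beta> * y + 1)" for y
    proof -
      have "\<beta> * y < 0 \<longleftrightarrow> y < 0" using assms(1) by (simp add: mult_less_0_iff)
      then show ?thesis using assms(1) by (simp add: exponential_density_def mult.assoc mult.left_commute)
    qed
    then show ?thesis
      by (simp only: exp_recip_mean_def real_scaleR_def integral_mult_right_zero[symmetric])
  qed
  finally show ?thesis .
qed

theorem proposition1:
  fixes K M :: nat and p \<beta> \<alpha> pce \<delta> \<sigma>2 \<zeta> :: real
    and \<Omega> :: "real measure" and G :: "real \<Rightarrow> real"
  assumes "K \<ge> 1" and "M \<ge> 2"
    and "p > 0" and "\<beta> > 0" and "\<alpha> > 0" and "pce > 0" and "\<delta> > 0" and "\<sigma>2 > 0"
    and "0 < \<zeta>" and "\<zeta> \<le> 1"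
    and "prob_space \<Omega>"
    and "distributed \<Omega> lborel G (exponential_density (1 / \<beta>))"
  shows "p * \<beta> * (\<zeta> * (real M - 1) * L1 K \<beta> \<alpha> pce \<delta> \<sigma>2 + 1)
           < P_I p \<beta> \<zeta> M (phi_exp \<Omega> G K \<beta> \<alpha> pce \<delta> \<sigma>2)
       \<and> P_I p \<beta> \<zeta> M (phi_exp \<Omega> G K \<beta> \<alpha> pce \<delta> \<sigma>2)
           < p * \<beta> * (\<zeta> * (real M - 1) * L2 K \<beta> \<alpha> pce \<delta> \<sigma>2 + 1)"
proof -
  define c where "c = \<beta> * \<alpha> * pce * \<delta> / (real K * \<sigma>2)"
  define a where "a = c * \<beta>"
  have "0 < a" using assms(1,4-8) by (simp add: a_def c_def)
  have phi: "phi_exp \<Omega> G K \<beta> \<alpha> pce \<delta> \<sigma>2 = exp_recip_mean a"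
    using integral_recip_affine_exponential[OF assms(4,12), of c]
    by (simp add: phi_exp_def a_def c_def mult.commute mult.left_commute)
  have L: "L1 K \<beta> \<alpha> pce \<delta> \<sigma>2 = 1 - ln (1 + a) / a"
    "L2 K \<beta> \<alpha> pce \<delta> \<sigma>2 = 1 - ln (1 + 2 * a) / (2 * a)"
    by (simp_all add: L1_def L2_def a_def c_def power2_eq_square field_simps)
  define k where "k = p * \<beta> * \<zeta> * (real M - 1)"
  have "0 < k" using assms(2-4,9) by (simp add: k_def)
  have "P_I p \<beta> \<zeta> M (phi_exp \<Omega> G K \<beta> \<alpha> pce \<delta> \<sigma>2) = p * \<beta> + k * (1 - exp_recip_mean a)"
    "p * \<beta> * (\<zeta> * (real M - 1) * L1 K \<beta> \<alpha> pce \<delta> \<sigma>2 + 1) = p * \<beta> + k * (1 - ln (1 + a) / a)"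
    "p * \<beta> * (\<zeta> * (real M - 1) * L2 K \<beta> \<alpha> pce \<delta> \<sigma>2 + 1) = p * \<beta> + k * (1 - ln (1 + 2 * a) / (2 * a))"
    using \<open>0 < a\<close> by (simp_all add: P_I_def phi L k_def field_simps)
  then show ?thesis
    using exp_recip_mean_less_ln[OF \<open>0 < a\<close>] ln_div_less_exp_recip_mean[OF \<open>0 < a\<close>] \<open>0 < k\<close>
    by simp
qed

end
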